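(* Let $\kappa<0$ and let $u=u(r;u_0)$ be the solution of $\frac{d}{dr}\big(u'/\sqrt{1+u'^2}\big)=\kappa u$, $u(0)=u_0$, $u'(0)=0$, with $$-\sqrt{\frac{-2}\kappa}<u_0<0.$$ Let $R>0$ be the first positive zero of $u$. Then $$\frac1{\sqrt{-2\kappa}}<R<\sqrt{\frac{-2e}\kappa}.$$
   Context: Under the hypothesis on $u_0$, $u$ is defined on all of $\mathbb R$, periodic, increasing on $[0,R]$, and has positive zeros; it is the profile of a pendent $\kappa$-cylindrical surface. *)

theory Defs
  imports Complex_Main
begin

end

theory Submission
  imports Defs "HOL-Analysis.Complex_Transcendental"
begin

(* Write slope_sine u' = sin psi for the inclination angle psi of the profile, so that the
   equation reads (sin psi)' = kappa u and cos psi + kappa u^2/2, with cos psi = 1/sqrt (1 + u'^2),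
   is a first integral.  On [0, R] the profile rises from u0 to 0.

   Lower bound: by the mean value theorem sin psi(R) <= R kappa u0, while the first integral gives
   cos psi(R) = 1 + kappa u0^2/2; squaring and comparing yields R^2 > 1/(-2 kappa).

   Upper bound: the first integral also gives u' >= sqrt (-kappa/2) sqrt (u0^2 - u^2), so
   arcsin (u/u0) decreases from pi/2 to 0 at rate at least sqrt (-kappa/2).  Hence
   R sqrt (-2 kappa) <= pi, and pi^2 < 4 e. *)

definition slope_sine :: "real \<Rightarrow> real" where
  "slope_sine p = p / sqrt (1 + p\<^sup>2)"

lemma sqrt_one_minus_slope_sine_sq: "sqrt (1 - (slope_sine p)\<^sup>2) = 1 / sqrt (1 + p\<^sup>2)"
proof -
  have "1 - (slope_sine p)\<^sup>2 = 1 / (1 + p\<^sup>2)"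
  proof -
    have "0 < 1 + p\<^sup>2" by (simp add: add_pos_nonneg)
    then show ?thesis unfolding slope_sine_def by (simp add: power_divide field_simps)
  qed
  then show ?thesis by (simp add: real_sqrt_divide)
qed

lemma slope_sine_sq_less_one: "(slope_sine p)\<^sup>2 < 1"
proof -
  have "0 < sqrt (1 - (slope_sine p)\<^sup>2)"
    unfolding sqrt_one_minus_slope_sine_sq by (simp add: add_pos_nonneg)
  then show ?thesis by simp
qed

lemma slope_sine_sq: "(slope_sine p)\<^sup>2 = 1 - (1 / sqrt (1 + p\<^sup>2))\<^sup>2"
  using slope_sine_sq_less_one[of p] by (simp flip: sqrt_one_minus_slope_sine_sq)

lemma slope_eq_slope_sine_div: "p = slope_sine p / sqrt (1 - (slope_sine p)\<^sup>2)"
  by (subst sqrt_one_minus_slope_sine_sq) (simp add: slope_sine_def add_nonneg_eq_0_iff)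

lemma slope_sine_pos_iff: "0 < slope_sine p \<longleftrightarrow> 0 < p"
proof -
  have "0 < sqrt (1 + p\<^sup>2)" by (simp add: add_pos_nonneg)
  then show ?thesis unfolding slope_sine_def by (simp add: zero_less_divide_iff)
qed

lemma one_minus_inverse_sqrt_le_sq: "1 - 1 / sqrt (1 + p\<^sup>2) \<le> p\<^sup>2"
proof -
  define s where "s = sqrt (1 + p\<^sup>2)"
  have "1 \<le> s" unfolding s_def by simp
  have "1 - 1 / s = (s - 1) / s" using \<open>1 \<le> s\<close> by (simp add: field_simps)
  also have "\<dots> \<le> s - 1" using \<open>1 \<le> s\<close> by (simp add: divide_le_eq mult_le_cancel_left1)
  also have "\<dots> \<le> s\<^sup>2 - 1"
    using \<open>1 \<le> s\<close> by (simp add: power2_eq_square mult_le_cancel_left1)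
  also have "\<dots> = p\<^sup>2" unfolding s_def by (simp add: add_nonneg_nonneg)
  finally show ?thesis unfolding s_def .
qed

lemma pi_sq_less_four_exp_one: "pi\<^sup>2 < 4 * exp 1"
proof -
  have "pi\<^sup>2 \<le> 3.16\<^sup>2"
    using pi_approx(2) pi_gt_zero by (intro power_mono) auto
  moreover have "(5/2::real) \<le> exp 1"
    using exp_lower_Taylor_quadratic[of 1] by simp
  ultimately show ?thesis by (simp add: power2_eq_square)
qed

locale capillary_profile =
  fixes \<kappa> :: real and u u' :: "real \<Rightarrow> real"
  assumes has_derivative_u: "\<And>r. (u has_real_derivative u' r) (at r)"
    and has_derivative_slope_sine: "\<And>r. ((\<lambda>s. slope_sine (u' s)) has_real_derivative \<kappa> * u r) (at r)"
begin

lemma energy_has_derivative: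
  "((\<lambda>r. sqrt (1 - (slope_sine (u' r))\<^sup>2) + \<kappa> * (u r)\<^sup>2 / 2) has_real_derivative 0) (at r)"
proof -
  let ?\<phi> = "slope_sine (u' r)"
  have "((\<lambda>r. sqrt (1 - (slope_sine (u' r))\<^sup>2) + \<kappa> * (u r)\<^sup>2 / 2) has_real_derivative
      inverse (sqrt (1 - ?\<phi>\<^sup>2)) / 2 * - (2 * ?\<phi> * (\<kappa> * u r)) + \<kappa> * (2 * u r * u' r) / 2) (at r)"
    using slope_sine_sq_less_one[of "u' r"]
    by (auto intro!: derivative_eq_intros has_derivative_slope_sine has_derivative_u)
  moreover have "inverse (sqrt (1 - ?\<phi>\<^sup>2)) / 2 * - (2 * ?\<phi> * (\<kappa> * u r)) + \<kappa> * (2 * u r * u' r) / 2 = 0"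
    by (subst (2) slope_eq_slope_sine_div[of "u' r"]) (simp add: field_simps)
  ultimately show ?thesis by metis
qed

lemma energy_conserved:
  "1 / sqrt (1 + (u' r)\<^sup>2) + \<kappa> * (u r)\<^sup>2 / 2 = 1 / sqrt (1 + (u' s)\<^sup>2) + \<kappa> * (u s)\<^sup>2 / 2"
  using DERIV_isconst_all[of "\<lambda>r. sqrt (1 - (slope_sine (u' r))\<^sup>2) + \<kappa> * (u r)\<^sup>2 / 2" r s]
    energy_has_derivative
  by (simp add: sqrt_one_minus_slope_sine_sq)

end

locale pendent_first_arc = capillary_profile +
  fixes R :: real
  assumes kappa_neg: "\<kappa> < 0" and u_0_neg: "u 0 < 0" and u'_0: "u' 0 = 0"
    and R_pos: "0 < R" and u_R: "u R = 0"
    and u_nonzero_before_R: "\<And>r. 0 < r \<Longrightarrow> r < R \<Longrightarrow> u r \<noteq> 0"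
begin

lemma u_neg:
  assumes "0 \<le> r" "r < R"
  shows "u r < 0"
proof (rule ccontr)
  assume "\<not> u r < 0"
  moreover have "isCont u x" for x
    using has_derivative_u DERIV_isCont by blast
  ultimately obtain x where "0 \<le> x" "x \<le> r" "u x = 0"
    using IVT[of u 0 0 r] u_0_neg assms(1) by fastforce
  then show False
    using u_nonzero_before_R[of x] u_0_neg assms by (cases "x = 0") auto
qed

lemma slope_sine_pos:
  assumes "0 < r" "r \<le> R"
  shows "0 < slope_sine (u' r)"
proof -
  obtain z where z: "0 < z" "z < r"
    and "slope_sine (u' r) - slope_sine (u' 0) = (r - 0) * (\<kappa> * u z)"
    using MVT2[of 0 r "\<lambda>s. slope_sine (u' s)" "\<lambda>s. \<kappa> * u s"] has_derivative_slope_sine assms(1)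
    by blast
  moreover have "0 < \<kappa> * u z"
    using kappa_neg u_neg[of z] z assms by (simp add: mult_neg_neg)
  ultimately show ?thesis
    using assms u'_0 by (simp add: slope_sine_def)
qed

lemma u'_pos: "0 < r \<Longrightarrow> r \<le> R \<Longrightarrow> 0 < u' r"
  using slope_sine_pos slope_sine_pos_iff by blast

lemma u_gt_u_0:
  assumes "0 < r" "r \<le> R"
  shows "u 0 < u r"
proof -
  obtain z where "0 < z" "z < r" "u r - u 0 = (r - 0) * u' z"
    using MVT2[of 0 r u u'] has_derivative_u assms(1) by blast
  moreover have "0 < r * u' z"
    using u'_pos[of z] \<open>0 < z\<close> \<open>z < r\<close> assms by simp
  ultimately show ?thesis
    by simp
qed

lemma slope_sine_at_R_le: "slope_sine (u' R) \<le> R * (\<kappa> * u 0)"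
proof -
  obtain z where z: "0 < z" "z < R"
    and "slope_sine (u' R) - slope_sine (u' 0) = (R - 0) * (\<kappa> * u z)"
    using MVT2[of 0 R "\<lambda>s. slope_sine (u' s)" "\<lambda>s. \<kappa> * u s"] has_derivative_slope_sine R_pos
    by blast
  moreover have "\<kappa> * u z \<le> \<kappa> * u 0"
    using u_gt_u_0[of z] z kappa_neg by simp
  ultimately show ?thesis
    using R_pos u'_0 by (simp add: slope_sine_def mult_left_mono)
qed

lemma R_lower_bound:
  assumes "- sqrt (-2 / \<kappa>) < u 0"
  shows "1 / sqrt (-2 * \<kappa>) < R"
proof -
  define x where "x = - \<kappa> * (u 0)\<^sup>2"
  have "(u 0)\<^sup>2 < -2 / \<kappa>"
    using assms u_0_neg kappa_neg by (smt (verit) real_sqrt_less_iff real_sqrt_abs)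
  then have x: "0 < x" "x < 2"
    unfolding x_def using kappa_neg u_0_neg by (simp_all add: field_simps mult_neg_pos)
  have "x * (1 / 2) < x * (1 - x / 4)"
    using x by (intro mult_strict_left_mono) auto
  also have "\<dots> = 1 - (1 - x / 2)\<^sup>2"
    by (simp add: power2_eq_square algebra_simps)
  also have "\<dots> = (slope_sine (u' R))\<^sup>2"
    using energy_conserved[of R 0] u_R u'_0 unfolding slope_sine_sq x_def by simp
  also have "\<dots> \<le> (R * (\<kappa> * u 0))\<^sup>2"
    using slope_sine_at_R_le slope_sine_pos[of R] R_pos by (intro power_mono) auto
  also have "\<dots> = x * (R\<^sup>2 * - \<kappa>)"
    unfolding x_def by (simp add: power2_eq_square)
  finally have "1 / 2 < R\<^sup>2 * - \<kappa>"
    using x by (simp only: mult_less_cancel_left_pos)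
  then have "1 / (-2 * \<kappa>) < R\<^sup>2"
    using kappa_neg by (simp add: field_simps)
  then have "sqrt (1 / (-2 * \<kappa>)) < R"
    using R_pos by (intro real_less_lsqrt) auto
  then show ?thesis
    by (simp only: real_sqrt_divide real_sqrt_one)
qed

lemma u'_lower_bound:
  assumes "0 < r" "r < R"
  shows "sqrt (- \<kappa> / 2) * sqrt ((u 0)\<^sup>2 - (u r)\<^sup>2) \<le> u' r"
proof -
  have "- \<kappa> / 2 * ((u 0)\<^sup>2 - (u r)\<^sup>2) = 1 - 1 / sqrt (1 + (u' r)\<^sup>2)"
    using energy_conserved[of r 0] u'_0 by (simp add: algebra_simps)
  also have "\<dots> \<le> (u' r)\<^sup>2"
    by (rule one_minus_inverse_sqrt_le_sq)
  finally have "sqrt (- \<kappa> / 2 * ((u 0)\<^sup>2 - (u r)\<^sup>2)) \<le> u' r"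
    using u'_pos[of r] assms by (simp add: real_sqrt_le_iff real_le_lsqrt)
  then show ?thesis
    by (simp only: real_sqrt_mult)
qed

lemma arcsin_ratio_has_derivative_le:
  assumes "0 < r" "r < R"
  shows "\<exists>y. ((\<lambda>s. arcsin (u s / u 0)) has_real_derivative y) (at r) \<and> y \<le> - sqrt (- \<kappa> / 2)"
proof -
  define w where "w = u r / u 0"
  have w: "0 < w" "w < 1"
    using u_neg[of r] u_gt_u_0[of r] u_0_neg assms unfolding w_def by (simp_all add: field_simps)
  have "((\<lambda>s. arcsin (u s / u 0)) has_real_derivative inverse (sqrt (1 - w\<^sup>2)) * (u' r / u 0)) (at r)"
    unfolding w_def using w
    by (intro DERIV_chain2[OF DERIV_arcsin] derivative_eq_intros)
      (auto simp: w_def intro: has_derivative_u)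
  moreover have "inverse (sqrt (1 - w\<^sup>2)) * (u' r / u 0) = - u' r / sqrt ((u 0)\<^sup>2 - (u r)\<^sup>2)"
  proof -
    have "1 - w\<^sup>2 = ((u 0)\<^sup>2 - (u r)\<^sup>2) / (u 0)\<^sup>2"
      unfolding w_def using u_0_neg by (simp add: field_simps power2_eq_square)
    then have "sqrt (1 - w\<^sup>2) * u 0 = - sqrt ((u 0)\<^sup>2 - (u r)\<^sup>2)"
      using u_0_neg by (simp add: real_sqrt_divide)
    moreover have "inverse (sqrt (1 - w\<^sup>2)) * (u' r / u 0) = u' r / (sqrt (1 - w\<^sup>2) * u 0)"
      by (simp add: divide_inverse mult_ac)
    ultimately show ?thesis
      by simp
  qed
  moreover have "- u' r / sqrt ((u 0)\<^sup>2 - (u r)\<^sup>2) \<le> - sqrt (- \<kappa> / 2)"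
  proof -
    have "0 < (u 0)\<^sup>2 - (u r)\<^sup>2"
      using u_neg[of r] u_gt_u_0[of r] assms power_strict_mono[of "- u r" "- u 0" 2] by simp
    then show ?thesis
      using u'_lower_bound[OF assms] by (simp add: field_simps)
  qed
  ultimately show ?thesis by auto
qed

lemma u_between:
  assumes "0 \<le> s" "s \<le> R"
  shows "u 0 \<le> u s" "u s \<le> 0"
proof -
  show "u 0 \<le> u s"
    using u_gt_u_0[of s] assms by (cases "s = 0") auto
  show "u s \<le> 0"
    using u_neg[of s] u_R assms by (cases "s = R") auto
qed

lemma R_upper_bound_pi: "R * sqrt (-2 * \<kappa>) \<le> pi"
proof -
  define m where "m = sqrt (- \<kappa> / 2)"
  define \<theta> where "\<theta> s = arcsin (u s / u 0) + m * s" for s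
  have "continuous_on {0..R} \<theta>"
    unfolding \<theta>_def
  proof (intro continuous_intros ballI conjI)
    show "continuous_on {0..R} u"
      using has_derivative_u by (meson DERIV_isCont continuous_at_imp_continuous_on)
    fix s assume "s \<in> {0..R}"
    then show "- 1 \<le> u s / u 0" "u s / u 0 \<le> 1"
      using u_between[of s] u_0_neg by (simp_all add: field_simps)
  qed (use u_0_neg in auto)
  moreover have "\<exists>y. (\<theta> has_real_derivative y) (at s) \<and> y \<le> 0" if s: "0 < s" "s < R" for s
  proof -
    obtain y where y: "((\<lambda>s. arcsin (u s / u 0)) has_real_derivative y) (at s)" "y \<le> - m"
      using arcsin_ratio_has_derivative_le[OF s, folded m_def] by blast
    have "(\<theta> has_real_derivative y + m) (at s)"
      unfolding \<theta>_def using DERIV_add[OF y(1) DERIV_cmult_Id[of m s]] by simp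
    with y(2) show ?thesis
      by (intro exI[of _ "y + m"]) simp
  qed
  ultimately have "\<theta> R \<le> \<theta> 0"
    using DERIV_nonpos_imp_decreasing_open[of 0 R \<theta>] R_pos by auto
  then have "m * R \<le> pi / 2"
    unfolding \<theta>_def using u_R u_0_neg by simp
  moreover have "sqrt (-2 * \<kappa>) = 2 * m"
    unfolding m_def using real_sqrt_mult[of 4 "- \<kappa> / 2"] by simp
  ultimately show ?thesis
    by (simp add: mult.commute)
qed

lemma R_upper_bound: "R < sqrt (-2 * exp 1 / \<kappa>)"
proof -
  have "R\<^sup>2 * (-2 * \<kappa>) = (R * sqrt (-2 * \<kappa>))\<^sup>2"
    using kappa_neg by (simp add: power_mult_distrib)
  also have "\<dots> \<le> pi\<^sup>2"
    using R_upper_bound_pi R_pos kappa_neg by (intro power_mono) auto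
  also have "\<dots> < 4 * exp 1"
    by (rule pi_sq_less_four_exp_one)
  finally have "R\<^sup>2 * (-2 * \<kappa>) < 4 * exp 1" .
  moreover have "0 < -2 * \<kappa>"
    using kappa_neg by simp
  ultimately have "R\<^sup>2 < 4 * exp 1 / (-2 * \<kappa>)"
    by (simp only: pos_less_divide_eq)
  also have "4 * exp 1 / (-2 * \<kappa>) = -2 * exp 1 / \<kappa>"
    by (simp add: divide_simps)
  finally show ?thesis
    by (rule real_less_rsqrt)
qed

end

theorem mainTheorem18:
  fixes \<kappa> u0 R :: real and u u' :: "real \<Rightarrow> real"
  assumes kappa: "\<kappa> < 0"
    and u0: "- sqrt (-2 / \<kappa>) < u0" "u0 < 0"
    and deriv_u: "\<And>r. (u has_real_derivative u' r) (at r)"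
    and ode: "\<And>r. ((\<lambda>s. u' s / sqrt (1 + (u' s)\<^sup>2)) has_real_derivative \<kappa> * u r) (at r)"
    and init: "u 0 = u0" "u' 0 = 0"
    and R_pos: "R > 0" and R_zero: "u R = 0"
    and R_first: "\<And>r. 0 < r \<Longrightarrow> r < R \<Longrightarrow> u r \<noteq> 0"
  shows "1 / sqrt (-2 * \<kappa>) < R \<and> R < sqrt (-2 * exp 1 / \<kappa>)"
proof -
  interpret pendent_first_arc \<kappa> u u' R
    by unfold_locales (use assms in \<open>auto simp: slope_sine_def\<close>)
  show ?thesis
    using R_lower_bound[OF u0(1)[folded init(1)]] R_upper_bound by blast
qed

end
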